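(* Fix $\mu,\nu,\delta>0$ and $\beta\in\mathbb{R}$. For $n\in\mathbb{N}_+$ set $\beta_n=\beta/n$ and $\varepsilon_n=n+\delta/n$, and let $f^*_{\varepsilon_n,\beta_n}$ be the map $f_{\varepsilon_n}$ (with parameters $\mu,\nu,\beta_n$) written in the scaled coordinates $(\xi,\eta,\zeta)$ around any of $P_\pm,Q_\pm$ (as defined in the context). Then there is a ball around the origin on which $f^*_{\varepsilon_n,\beta_n}$ converges, as $n\to\infty$ (uniformly, together with its Taylor expansion), to the quadratic map $\xi'=\xi+2\pi\mu\eta$, $\eta'=\eta+2\pi\nu\zeta'$, $\zeta'=\zeta+\delta-2\pi^2\xi^2-2\pi\sigma\beta\eta$ (with $\sigma=+1$ for $P_\pm$, $\sigma=-1$ for $Q_\pm$), which is linearly conjugate to $M_{\varphi,a}$ in the case of $P_\pm$ and to $M_{\varphi,-a}$ in the case of $Q_\pm$, where $\varphi=\pi(32\mu^2\nu^2\delta)^{1/6}$ and $a=\beta\left(\frac{2\nu}{\delta\mu^2}\right)^{1/3}$.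
   Context: Let $\psi:\mathbb{R}\to\mathbb{R}$ be a real-analytic degree-one circle map ($\psi(z+1)=\psi(z)+1$) with $\psi(z)-z$ odd and period-one and $\psi(0)=\psi'(0)=0$. For parameters $\varepsilon,\mu,\nu,\beta$, $f_\varepsilon:\mathbb{T}^2\times\mathbb{R}\to\mathbb{T}^2\times\mathbb{R}$ is $z'=z+\varepsilon(\cos(2\pi x)-\beta\sin(2\pi y))$, $y'=y+\nu\sin(2\pi z')$, $x'=x+\mu\sin(2\pi y)+\psi(z')$ ($x,y$ mod 1). The points $P_+=(0,0,0)$, $P_-=(\tfrac12,0,0)$, $Q_+=(0,\tfrac12,0)$, $Q_-=(\tfrac12,\tfrac12,0)$ are fixed point accelerator modes at $\varepsilon=n$, with $z$-jumps $+n$ ($P_+,Q_+$) and $-n$ ($P_-,Q_-$). The scaled coordinates are $(\xi,\eta,\zeta)=n(x,y,z)$ near $P_+$, $n(\tfrac12-x,-y,-z)$ near $P_-$, $n(-x,y-\tfrac12,z)$ near $Q_+$, $n(x-\tfrac12,\tfrac12-y,-z)$ near $Q_-$, and in these coordinates the integer $z$-jump of the accelerator mode is removed. The Michelson map $M_{\varphi,a}$ is $(u,v,w)\mapsto(u',v',w')$ with $w'=w+\varphi(1-u^2-av)$, $v'=v+\varphi w'$, $u'=u+\varphi v$. *)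

theory Defs
  imports "HOL-Analysis.Analysis"
begin

definition real_analytic :: "(real \<Rightarrow> real) \<Rightarrow> bool" where
  "real_analytic g \<longleftrightarrow>
     (\<forall>x. \<exists>r>0. \<exists>c::nat \<Rightarrow> real. \<forall>y\<in>ball x r. (\<lambda>k. c k * (y - x) ^ k) sums g y)"

text \<open>Lift of the map f_eps to R^3 (x,y not reduced mod 1).\<close>
definition lift_f :: "(real \<Rightarrow> real) \<Rightarrow> real \<Rightarrow> real \<Rightarrow> real \<Rightarrow> real
    \<Rightarrow> real \<times> real \<times> real \<Rightarrow> real \<times> real \<times> real" where
  "lift_f \<psi> \<epsilon> \<mu> \<nu> \<beta> = (\<lambda>(x, y, z).
     let z' = z + \<epsilon> * (cos (2 * pi * x) - \<beta> * sin (2 * pi * y));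
         y' = y + \<nu> * sin (2 * pi * z');
         x' = x + \<mu> * sin (2 * pi * y) + \<psi> z'
     in (x', y', z'))"

datatype accpt = Pplus | Pminus | Qplus | Qminus

fun base_pt :: "accpt \<Rightarrow> real \<times> real \<times> real" where
  "base_pt Pplus = (0, 0, 0)"
| "base_pt Pminus = (1/2, 0, 0)"
| "base_pt Qplus = (0, 1/2, 0)"
| "base_pt Qminus = (1/2, 1/2, 0)"

fun chart_sgn :: "accpt \<Rightarrow> real \<times> real \<times> real" where
  "chart_sgn Pplus = (1, 1, 1)"
| "chart_sgn Pminus = (-1, -1, -1)"
| "chart_sgn Qplus = (-1, 1, 1)"
| "chart_sgn Qminus = (1, -1, -1)"

text \<open>Sign of the integer jump (+n for P+,Q+; -n for P-,Q-).\<close>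
fun jump_sgn :: "accpt \<Rightarrow> real" where
  "jump_sgn Pplus = 1"
| "jump_sgn Pminus = -1"
| "jump_sgn Qplus = 1"
| "jump_sgn Qminus = -1"

fun sigma_pt :: "accpt \<Rightarrow> real" where
  "sigma_pt Pplus = 1"
| "sigma_pt Pminus = 1"
| "sigma_pt Qplus = -1"
| "sigma_pt Qminus = -1"

definition to_scaled :: "real \<Rightarrow> accpt \<Rightarrow> real \<times> real \<times> real \<Rightarrow> real \<times> real \<times> real" where
  "to_scaled n p = (\<lambda>(x, y, z). case base_pt p of (px, py, pz) \<Rightarrow> case chart_sgn p of (sx, sy, sz) \<Rightarrow>
      (n * sx * (x - px), n * sy * (y - py), n * sz * (z - pz)))"

definition from_scaled :: "real \<Rightarrow> accpt \<Rightarrow> real \<times> real \<times> real \<Rightarrow> real \<times> real \<times> real" where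
  "from_scaled n p = (\<lambda>(\<xi>, \<eta>, \<zeta>). case base_pt p of (px, py, pz) \<Rightarrow> case chart_sgn p of (sx, sy, sz) \<Rightarrow>
      (px + sx * \<xi> / n, py + sy * \<eta> / n, pz + sz * \<zeta> / n))"

text \<open>f^*_{eps_n,beta_n} in scaled coordinates around p, with eps_n = n + delta/n, beta_n = beta/n,
  the integer jump (x and z both jump by the same integer +-n; the x-jump is invisible on the torus)
  removed.\<close>
definition fstar :: "(real \<Rightarrow> real) \<Rightarrow> real \<Rightarrow> real \<Rightarrow> real \<Rightarrow> real \<Rightarrow> accpt \<Rightarrow> nat
    \<Rightarrow> real \<times> real \<times> real \<Rightarrow> real \<times> real \<times> real" where
  "fstar \<psi> \<mu> \<nu> \<delta> \<beta> p n X =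
     (let m = real n; j = jump_sgn p * m in
      to_scaled m p (lift_f \<psi> (m + \<delta> / m) \<mu> \<nu> (\<beta> / m) (from_scaled m p X) - (j, 0, j)))"

definition quad_map :: "real \<Rightarrow> real \<Rightarrow> real \<Rightarrow> real \<Rightarrow> real
    \<Rightarrow> real \<times> real \<times> real \<Rightarrow> real \<times> real \<times> real" where
  "quad_map \<mu> \<nu> \<delta> \<beta> \<sigma> = (\<lambda>(\<xi>, \<eta>, \<zeta>).
     let \<zeta>' = \<zeta> + \<delta> - 2 * pi\<^sup>2 * \<xi>\<^sup>2 - 2 * pi * \<sigma> * \<beta> * \<eta>;
         \<eta>' = \<eta> + 2 * pi * \<nu> * \<zeta>';
         \<xi>' = \<xi> + 2 * pi * \<mu> * \<eta>
     in (\<xi>', \<eta>', \<zeta>'))"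

definition michelson :: "real \<Rightarrow> real \<Rightarrow> real \<times> real \<times> real \<Rightarrow> real \<times> real \<times> real" where
  "michelson \<phi> a = (\<lambda>(u, v, w).
     let w' = w + \<phi> * (1 - u\<^sup>2 - a * v);
         v' = v + \<phi> * w';
         u' = u + \<phi> * v
     in (u', v', w'))"

fun iter_dderiv :: "'a list \<Rightarrow> ('a::real_normed_vector \<Rightarrow> 'b::real_normed_vector) \<Rightarrow> 'a \<Rightarrow> 'b" where
  "iter_dderiv [] g = g"
| "iter_dderiv (v # vs) g = (\<lambda>x. frechet_derivative (iter_dderiv vs g) (at x) v)"

end

theory Submission
  imports Defs
begin

text \<open>In the scaled chart the map \<open>f*\<^sub>n\<close> is built from the coordinates by sums, products and
  blow-ups \<open>n g(a\<^sub>n/n)\<close> of functions with \<open>g 0 = 0\<close> (namely \<open>sin\<close> and \<open>\<psi>\<close>), with coefficients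
  converging to constants. Such a blow-up tends to \<open>g'(0) a\<close> uniformly on bounded sets, by the mean
  value theorem, and its derivatives are of the same shape with \<open>g\<close> replaced by \<open>g'\<close>; hence all
  derivatives converge as well. Since \<open>\<psi>'(0) = 0\<close> the \<open>\<psi>\<close>-term drops out and the limit is the
  quadratic map, which a diagonal rescaling conjugates to the Michelson map.\<close>

definition deriv_tower :: "(nat \<Rightarrow> real \<Rightarrow> real) \<Rightarrow> bool" where
  "deriv_tower \<Phi> \<longleftrightarrow> (\<forall>k y. (\<Phi> k has_real_derivative \<Phi> (Suc k) y) (at y))"

lemma deriv_tower_continuous_on: "deriv_tower \<Phi> \<Longrightarrow> continuous_on S (\<Phi> k)"
  unfolding deriv_tower_def by (meson DERIV_isCont continuous_at_imp_continuous_on)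

lemma deriv_tower_mvt:
  assumes "deriv_tower \<Phi>"
  shows "\<exists>t. \<bar>t\<bar> \<le> \<bar>s\<bar> \<and> \<Phi> k s - \<Phi> k 0 = s * \<Phi> (Suc k) t"
proof -
  have D: "\<And>y. (\<Phi> k has_real_derivative \<Phi> (Suc k) y) (at y)"
    using assms unfolding deriv_tower_def by blast
  consider "s > 0" | "s < 0" | "s = 0" by linarith
  then show ?thesis
  proof cases
    case 1
    from MVT2[OF 1 D] obtain t where "0 < t" "t < s" "\<Phi> k s - \<Phi> k 0 = (s - 0) * \<Phi> (Suc k) t"
      by blast
    then show ?thesis by (intro exI[of _ t]) auto
  next
    case 2
    from MVT2[OF 2 D] obtain t where "s < t" "t < 0" "\<Phi> k 0 - \<Phi> k s = (0 - s) * \<Phi> (Suc k) t"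
      by blast
    then show ?thesis by (intro exI[of _ t]) (auto simp: algebra_simps)
  qed auto
qed

lemma has_derivative_deriv_tower_scaled:
  assumes "deriv_tower \<Phi>" and "(g has_derivative g') (at x)"
  shows "((\<lambda>x. c * \<Phi> k (g x / m)) has_derivative
           (\<lambda>h. \<Phi> (Suc k) (g x / m) * (c / m * g' h))) (at x)"
proof -
  have "((\<lambda>x. g x / m) has_derivative (\<lambda>h. g' h / m)) (at x)"
    using has_derivative_mult_left[OF assms(2), of "inverse m"] by (simp add: divide_inverse)
  then have "((\<lambda>x. \<Phi> k (g x / m)) has_derivative (\<lambda>h. g' h / m * \<Phi> (Suc k) (g x / m))) (at x)"
    using assms(1) unfolding deriv_tower_def
    by (intro DERIV_compose_FDERIV[where f = "\<Phi> k" and g = "\<lambda>x. g x / m"]) auto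
  then show ?thesis
    by (rule has_derivative_eq_rhs[OF has_derivative_mult_right]) (auto simp: fun_eq_iff)
qed

lemma power_series_has_real_derivative:
  assumes sums: "\<forall>y\<in>ball x r. (\<lambda>i. c i * (y - x) ^ i) sums g y" and y: "y \<in> ball x r"
  shows "(g has_real_derivative (\<Sum>i. diffs c i * (y - x) ^ i)) (at y)"
    and "(\<lambda>i. diffs c i * (y - x) ^ i) sums (\<Sum>i. diffs c i * (y - x) ^ i)"
proof -
  have conv: "summable (\<lambda>i. c i * z ^ i)" if "norm z < r" for z :: real
    using sums[rule_format, of "x + z"] that by (auto simp: dist_real_def sums_iff)
  have yx: "norm (y - x) < r"
    using y by (simp add: dist_real_def abs_minus_commute)
  have "((\<lambda>z. \<Sum>i. c i * z ^ i) has_real_derivative (\<Sum>i. diffs c i * (y - x) ^ i)) (at (y - x))"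
    by (rule termdiffs_strong'[OF conv yx])
  from DERIV_chain2[where g = "\<lambda>t. t - x" and x = y, OF this]
  have "((\<lambda>t. \<Sum>i. c i * (t - x) ^ i) has_real_derivative (\<Sum>i. diffs c i * (y - x) ^ i)) (at y)"
    using DERIV_diff[OF DERIV_ident DERIV_const, of x y] by fastforce
  then show "(g has_real_derivative (\<Sum>i. diffs c i * (y - x) ^ i)) (at y)"
    by (rule has_field_derivative_transform_within_open[OF _ open_ball y])
      (use sums in \<open>auto simp: sums_iff\<close>)
  show "(\<lambda>i. diffs c i * (y - x) ^ i) sums (\<Sum>i. diffs c i * (y - x) ^ i)"
    using termdiff_converges[OF yx conv] by (simp add: summable_sums)
qed

lemma real_analytic_has_real_derivative:
  assumes "real_analytic g"
  shows "(g has_real_derivative deriv g y) (at y)"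
proof -
  obtain r c where "r > 0" "\<forall>z\<in>ball y r. (\<lambda>i. c i * (z - y) ^ i) sums g z"
    using assms unfolding real_analytic_def by blast
  with power_series_has_real_derivative(1)[of y r c g y] show ?thesis
    by (auto simp: DERIV_deriv_iff_real_differentiable real_differentiable_def)
qed

lemma real_analytic_deriv:
  assumes "real_analytic g"
  shows "real_analytic (deriv g)"
  unfolding real_analytic_def
proof
  fix x
  obtain r c where r: "r > 0" and sums: "\<forall>y\<in>ball x r. (\<lambda>i. c i * (y - x) ^ i) sums g y"
    using assms unfolding real_analytic_def by blast
  have "(\<lambda>i. diffs c i * (y - x) ^ i) sums deriv g y" if "y \<in> ball x r" for y
    using power_series_has_real_derivative[OF sums that] by (simp add: DERIV_imp_deriv)
  with r show "\<exists>r>0. \<exists>c. \<forall>y\<in>ball x r. (\<lambda>k. c k * (y - x) ^ k) sums deriv g y"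
    by blast
qed

lemma real_analytic_deriv_tower:
  assumes "real_analytic g"
  shows "deriv_tower (\<lambda>k. (deriv ^^ k) g)"
proof -
  have "real_analytic ((deriv ^^ k) g)" for k
    by (induction k) (simp_all add: assms real_analytic_deriv)
  then show ?thesis
    unfolding deriv_tower_def by (simp add: real_analytic_has_real_derivative)
qed

definition sin_tower :: "nat \<Rightarrow> real \<Rightarrow> real" where
  "sin_tower k y = sin (y + real k * pi / 2)"

lemma deriv_tower_sin: "deriv_tower sin_tower"
  unfolding deriv_tower_def
proof (intro allI)
  fix k y
  have "y + real (Suc k) * pi / 2 = (y + real k * pi / 2) + pi / 2"
    by (simp add: algebra_simps)
  then have "cos (y + real k * pi / 2) = sin (y + real (Suc k) * pi / 2)"
    by (simp only: sin_add) simp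
  then show "(sin_tower k has_real_derivative sin_tower (Suc k) y) (at y)"
    unfolding sin_tower_def by (auto intro!: derivative_eq_intros)
qed

lemma sin_tower_simps [simp]: "sin_tower 0 y = sin y" "sin_tower (Suc 0) 0 = 1"
  by (simp_all add: sin_tower_def)

lemma uniform_limit_const_seq:
  "c \<longlonglongrightarrow> L \<Longrightarrow> uniform_limit U (\<lambda>n x. c n) (\<lambda>x. L) sequentially"
  by (auto intro!: uniform_limitI dest: tendstoD)

lemma uniform_limit_shrink:
  fixes as :: "nat \<Rightarrow> 'a \<Rightarrow> real"
  assumes "uniform_limit U as a sequentially" and "bounded (a ` U)"
  shows "uniform_limit U (\<lambda>n x. as n x / real n) (\<lambda>x. 0) sequentially"
proof -
  have "uniform_limit U (\<lambda>n x. as n x * (1 / real n)) (\<lambda>x. a x * 0) sequentially"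
    by (intro uniform_lim_mult assms uniform_limit_const_seq lim_const_over_n)
      (auto simp: image_constant_conv)
  then show ?thesis by simp
qed

lemma uniform_limit_deriv_tower_at_0:
  assumes "deriv_tower \<Phi>" and "uniform_limit U t (\<lambda>x. 0) sequentially"
  shows "uniform_limit U (\<lambda>n x. \<Phi> k (t n x)) (\<lambda>x. \<Phi> k 0) sequentially"
proof -
  have "uniformly_continuous_on (cball 0 1) (\<Phi> k)"
    using assms(1) by (intro compact_uniformly_continuous deriv_tower_continuous_on) auto
  moreover have "\<forall>\<^sub>F n in sequentially. t n ` U \<subseteq> cball 0 1"
    using uniform_limitD[OF assms(2) zero_less_one] by eventually_elim (auto simp: dist_real_def)
  moreover have "(\<lambda>x. 0) ` U \<subseteq> cball 0 1"
    by auto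
  ultimately show ?thesis
    using uniform_limit_compose[OF assms(2)] by (simp add: o_def)
qed

lemma uniform_limit_blowup:
  assumes \<Phi>: "deriv_tower \<Phi>" "\<Phi> k 0 = 0"
    and as: "uniform_limit U as a sequentially" "bounded (a ` U)"
  shows "uniform_limit U (\<lambda>n x. real n * \<Phi> k (as n x / real n)) (\<lambda>x. \<Phi> (Suc k) 0 * a x)
           sequentially"
proof -
  have "\<forall>n x. \<exists>\<tau>. \<bar>\<tau>\<bar> \<le> \<bar>as n x / real n\<bar> \<and>
                 \<Phi> k (as n x / real n) = as n x / real n * \<Phi> (Suc k) \<tau>"
  proof (intro allI)
    fix n x
    from deriv_tower_mvt[OF \<Phi>(1), of "as n x / real n" k] \<Phi>(2)
    show "\<exists>\<tau>. \<bar>\<tau>\<bar> \<le> \<bar>as n x / real n\<bar> \<and>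
                 \<Phi> k (as n x / real n) = as n x / real n * \<Phi> (Suc k) \<tau>"
      by simp
  qed
  then obtain t where t: "\<And>n x. \<bar>t n x\<bar> \<le> \<bar>as n x / real n\<bar>"
    "\<And>n x. \<Phi> k (as n x / real n) = as n x / real n * \<Phi> (Suc k) (t n x)"
    unfolding choice_iff by blast
  have "\<forall>\<^sub>F n in sequentially. \<forall>x\<in>U. norm (t n x) \<le> norm (as n x / real n)"
    using t(1) by simp
  moreover have "uniform_limit U (\<lambda>n x. norm (as n x / real n)) (\<lambda>x. 0) sequentially"
    using uniform_limit_norm[OF uniform_limit_shrink[OF as]] by simp
  ultimately have "uniform_limit U t (\<lambda>x. 0) sequentially"
    by (rule uniform_limit_null_comparison)
  then have "uniform_limit U (\<lambda>n x. \<Phi> (Suc k) (t n x)) (\<lambda>x. \<Phi> (Suc k) 0) sequentially"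
    by (rule uniform_limit_deriv_tower_at_0[OF \<Phi>(1)])
  then have lim: "uniform_limit U (\<lambda>n x. as n x * \<Phi> (Suc k) (t n x)) (\<lambda>x. a x * \<Phi> (Suc k) 0)
               sequentially"
    by (rule uniform_lim_mult[OF as(1) _ as(2)]) (simp add: image_constant_conv)
  have eq: "\<forall>\<^sub>F n in sequentially. \<forall>x\<in>U.
                   as n x * \<Phi> (Suc k) (t n x) = real n * \<Phi> k (as n x / real n)"
    using eventually_gt_at_top[of 0] by eventually_elim (simp add: t(2))
  show ?thesis
    by (rule uniform_limit_cong[THEN iffD1, OF eq _ lim]) simp
qed

lemma bounded_mult_comp:
  fixes f g :: "'a \<Rightarrow> 'b::real_normed_algebra"
  assumes "bounded (f ` S)" and "bounded (g ` S)"
  shows "bounded ((\<lambda>x. f x * g x) ` S)"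
proof -
  obtain B C where "\<forall>x\<in>S. norm (f x) \<le> B" "\<forall>x\<in>S. norm (g x) \<le> C"
    using assms unfolding bounded_iff by auto
  then have "\<forall>x\<in>S. norm (f x * g x) \<le> B * C"
    by (meson norm_ge_zero norm_mult_ineq mult_mono order_trans)
  then show ?thesis
    unfolding bounded_iff by auto
qed

lemma uniform_limit_Pair:
  assumes "uniform_limit U f g F" and "uniform_limit U h k F"
  shows "uniform_limit U (\<lambda>n x. (f n x, h n x)) (\<lambda>x. (g x, k x)) F"
proof (rule uniform_limitI)
  fix e :: real
  assume "e > 0"
  then have e2: "e / 2 > 0" by simp
  from uniform_limitD[OF assms(1) e2] uniform_limitD[OF assms(2) e2]
  show "\<forall>\<^sub>F n in F. \<forall>x\<in>U. dist (f n x, h n x) (g x, k x) < e"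
  proof eventually_elim
    case (elim n)
    show ?case
    proof
      fix x
      assume "x \<in> U"
      with elim have "dist (f n x) (g x) < e / 2" and "dist (h n x) (k x) < e / 2"
        by auto
      moreover have "dist (f n x, h n x) (g x, k x) \<le> dist (f n x) (g x) + dist (h n x) (k x)"
        unfolding dist_Pair_Pair by (rule order_trans[OF sqrt_sum_squares_le_sum_abs]) simp
      ultimately show "dist (f n x, h n x) (g x, k x) < e"
        by linarith
    qed
  qed
qed

text \<open>Pairs \<open>(f\<^sub>n, f)\<close> of a family and its expected limit. Every such \<open>f\<^sub>n\<close> converges to \<open>f\<close>
  uniformly on bounded sets, and the set is closed under directional derivatives: differentiating
  \<open>\<Phi> k (a\<^sub>n/n)\<close> or \<open>n \<Phi> k (a\<^sub>n/n)\<close> gives \<open>\<Phi> (Suc k) (a\<^sub>n/n)\<close> times \<open>1/n\<close> resp. \<open>n/n\<close> times a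
  derivative of \<open>a\<^sub>n\<close>, which is again of this form.\<close>
inductive_set scaling_limit :: "((nat \<Rightarrow> 'a::real_normed_vector \<Rightarrow> real) \<times> ('a \<Rightarrow> real)) set" where
  linear: "bounded_linear l \<Longrightarrow> (\<lambda>n. l, l) \<in> scaling_limit"
| const: "c \<longlonglongrightarrow> L \<Longrightarrow> (\<lambda>n x. c n, \<lambda>x. L) \<in> scaling_limit"
| add: "(fs, f) \<in> scaling_limit \<Longrightarrow> (gs, g) \<in> scaling_limit \<Longrightarrow>
    (\<lambda>n x. fs n x + gs n x, \<lambda>x. f x + g x) \<in> scaling_limit"
| mult: "(fs, f) \<in> scaling_limit \<Longrightarrow> (gs, g) \<in> scaling_limit \<Longrightarrow>
    (\<lambda>n x. fs n x * gs n x, \<lambda>x. f x * g x) \<in> scaling_limit"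
| shrink: "deriv_tower \<Phi> \<Longrightarrow> (as, a) \<in> scaling_limit \<Longrightarrow>
    (\<lambda>n x. \<Phi> k (as n x / real n), \<lambda>x. \<Phi> k 0) \<in> scaling_limit"
| blowup: "deriv_tower \<Phi> \<Longrightarrow> (as, a) \<in> scaling_limit \<Longrightarrow> \<Phi> k 0 = 0 \<Longrightarrow>
    (\<lambda>n x. real n * \<Phi> k (as n x / real n), \<lambda>x. \<Phi> (Suc k) 0 * a x) \<in> scaling_limit"

lemma scaling_limit_cong: "(fs, f) \<in> scaling_limit \<Longrightarrow> fs = gs \<Longrightarrow> f = g \<Longrightarrow> (gs, g) \<in> scaling_limit"
  by simp

lemma scaling_limit_constant: "(\<lambda>n x. c, \<lambda>x. c) \<in> scaling_limit"
  using scaling_limit.const[OF tendsto_const] .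

lemma scaling_limit_coordinates:
  "(\<lambda>n. fst, fst) \<in> scaling_limit"
  "(\<lambda>n X. fst (snd X), \<lambda>X. fst (snd X)) \<in> scaling_limit"
  "(\<lambda>n X. snd (snd X), \<lambda>X. snd (snd X)) \<in> scaling_limit"
  by (intro scaling_limit.linear bounded_linear_fst bounded_linear_snd
      bounded_linear_compose[OF bounded_linear_fst] bounded_linear_compose[OF bounded_linear_snd])+

lemma scaling_limit_diff:
  assumes "(fs, f) \<in> scaling_limit" and "(gs, g) \<in> scaling_limit"
  shows "(\<lambda>n x. fs n x - gs n x, \<lambda>x. f x - g x) \<in> scaling_limit"
  using scaling_limit.add[OF assms(1) scaling_limit.mult[OF scaling_limit_constant assms(2)], of "-1"]
  by simp

lemma scaling_limit_blowup_sin: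
  "(as, a) \<in> scaling_limit \<Longrightarrow> (\<lambda>n x. real n * sin (as n x / real n), a) \<in> scaling_limit"
  using scaling_limit.blowup[OF deriv_tower_sin, of as a 0] by simp

lemma scaling_limit_uniform_limit:
  assumes "bounded U" and "(fs, f) \<in> scaling_limit"
  shows "uniform_limit U fs f sequentially \<and> bounded (f ` U)"
  using assms(2)
proof (induction rule: scaling_limit.induct)
  case (linear l)
  then show ?case
    using assms(1) by (simp add: uniform_limit_const bounded_linear_image)
next
  case (const c L)
  then show ?case
    by (simp add: uniform_limit_const_seq image_constant_conv)
next
  case (add fs f gs g)
  then show ?case
    by (simp add: uniform_limit_add bounded_plus_comp)
next
  case (mult fs f gs g)
  then show ?case
    by (simp add: uniform_lim_mult bounded_mult_comp)
next
  case (shrink \<Phi> as a k)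
  then show ?case
    using uniform_limit_deriv_tower_at_0 uniform_limit_shrink
    by (simp add: image_constant_conv) blast
next
  case (blowup \<Phi> as a k)
  then show ?case
    by (simp add: uniform_limit_blowup bounded_mult_comp image_constant_conv)
qed

lemma scaling_limit_derivI:
  assumes "\<And>n x. (fs n has_derivative Dfs n x) (at x)" and "\<And>x. (f has_derivative Df x) (at x)"
    and "\<And>v. (\<lambda>n x. Dfs n x v, \<lambda>x. Df x v) \<in> scaling_limit"
  shows "(\<forall>n x. fs n differentiable (at x)) \<and> (\<forall>x. f differentiable (at x)) \<and>
    (\<forall>v. (\<lambda>n x. frechet_derivative (fs n) (at x) v, \<lambda>x. frechet_derivative f (at x) v)
          \<in> scaling_limit)"
proof -
  have "frechet_derivative (fs n) (at x) = Dfs n x" "frechet_derivative f (at x) = Df x" for n x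
    using assms(1,2) by (metis frechet_derivative_at)+
  then show ?thesis
    using assms by (auto simp: differentiable_def; blast)
qed

lemma scaling_limit_deriv:
  assumes "(fs, f) \<in> scaling_limit"
  shows "(\<forall>n x. fs n differentiable (at x)) \<and> (\<forall>x. f differentiable (at x)) \<and>
    (\<forall>v. (\<lambda>n x. frechet_derivative (fs n) (at x) v, \<lambda>x. frechet_derivative f (at x) v)
          \<in> scaling_limit)"
  using assms
proof (induction rule: scaling_limit.induct)
  case (linear l)
  then show ?case
    by (intro scaling_limit_derivI[where Dfs = "\<lambda>n x. l" and Df = "\<lambda>x. l"]
        bounded_linear_imp_has_derivative scaling_limit.const tendsto_const)
next
  case (const c L)
  then show ?case
    by (intro scaling_limit_derivI[where Dfs = "\<lambda>n x h. 0" and Df = "\<lambda>x h. 0"]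
        has_derivative_const scaling_limit.const tendsto_const)
next
  case (add fs f gs g)
  then show ?case
    by (intro scaling_limit_derivI[where
          Dfs = "\<lambda>n x h. frechet_derivative (fs n) (at x) h + frechet_derivative (gs n) (at x) h"
          and Df = "\<lambda>x h. frechet_derivative f (at x) h + frechet_derivative g (at x) h"]
        has_derivative_add frechet_derivative_works[THEN iffD1] scaling_limit.add) auto
next
  case (mult fs f gs g)
  then show ?case
    by (intro scaling_limit_derivI[where
          Dfs = "\<lambda>n x h. fs n x * frechet_derivative (gs n) (at x) h
                          + frechet_derivative (fs n) (at x) h * gs n x"
          and Df = "\<lambda>x h. f x * frechet_derivative g (at x) h + frechet_derivative f (at x) h * g x"]
        has_derivative_mult frechet_derivative_works[THEN iffD1] scaling_limit.add scaling_limit.mult)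
      auto
next
  case (shrink \<Phi> as a k)
  let ?Das = "\<lambda>n x. frechet_derivative (as n) (at x)"
  have "((\<lambda>x. 1 * \<Phi> k (as n x / real n)) has_derivative
          (\<lambda>h. \<Phi> (Suc k) (as n x / real n) * (1 / real n * ?Das n x h))) (at x)" for n x
    using shrink by (intro has_derivative_deriv_tower_scaled frechet_derivative_works[THEN iffD1]) auto
  moreover have "(\<lambda>n x. \<Phi> (Suc k) (as n x / real n) * (1 / real n * ?Das n x v),
                   \<lambda>x. \<Phi> (Suc k) 0 * (0 * frechet_derivative a (at x) v)) \<in> scaling_limit" for v
    using shrink
    by (intro scaling_limit.mult scaling_limit.shrink scaling_limit.const lim_const_over_n) auto
  ultimately show ?case
    by (intro scaling_limit_derivI[where Df = "\<lambda>x h. 0"]) auto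
next
  case (blowup \<Phi> as a k)
  let ?Das = "\<lambda>n x. frechet_derivative (as n) (at x)"
  have "((\<lambda>x. real n * \<Phi> k (as n x / real n)) has_derivative
          (\<lambda>h. \<Phi> (Suc k) (as n x / real n) * (real n / real n * ?Das n x h))) (at x)" for n x
    using blowup by (intro has_derivative_deriv_tower_scaled frechet_derivative_works[THEN iffD1]) auto
  moreover have "((\<lambda>x. \<Phi> (Suc k) 0 * a x) has_derivative
                   (\<lambda>h. \<Phi> (Suc k) 0 * frechet_derivative a (at x) h)) (at x)" for x
    using blowup by (intro has_derivative_mult_right frechet_derivative_works[THEN iffD1]) auto
  moreover have "(\<lambda>n. real n / real n) \<longlonglongrightarrow> 1"
    using eventually_gt_at_top[of "0::nat"] by (intro tendsto_eventually) (auto elim: eventually_mono)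
  then have "(\<lambda>n x. \<Phi> (Suc k) (as n x / real n) * (real n / real n * ?Das n x v),
              \<lambda>x. \<Phi> (Suc k) 0 * (1 * frechet_derivative a (at x) v)) \<in> scaling_limit" for v
    using blowup by (intro scaling_limit.mult scaling_limit.shrink scaling_limit.const) auto
  ultimately show ?case
    by (intro scaling_limit_derivI) auto
qed

lemma scaling_limit_iter_dderiv:
  assumes "(fs, f) \<in> scaling_limit"
  shows "(\<lambda>n. iter_dderiv vs (fs n), iter_dderiv vs f) \<in> scaling_limit"
  by (induction vs) (use assms scaling_limit_deriv in auto)

lemma scaling_limit_differentiable:
  assumes "(fs, f) \<in> scaling_limit"
  shows "iter_dderiv vs (fs n) differentiable (at x)" and "iter_dderiv vs f differentiable (at x)"
  using scaling_limit_deriv[OF scaling_limit_iter_dderiv[OF assms]] by auto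

lemma iter_dderiv_triple:
  fixes f g h :: "'a::real_normed_vector \<Rightarrow> real"
  assumes "\<And>vs x. iter_dderiv vs f differentiable (at x)"
    and "\<And>vs x. iter_dderiv vs g differentiable (at x)"
    and "\<And>vs x. iter_dderiv vs h differentiable (at x)"
  shows "iter_dderiv vs (\<lambda>x. (f x, g x, h x)) =
           (\<lambda>x. (iter_dderiv vs f x, iter_dderiv vs g x, iter_dderiv vs h x))"
proof (induction vs)
  case (Cons v vs)
  have "frechet_derivative (\<lambda>x. (iter_dderiv vs f x, iter_dderiv vs g x, iter_dderiv vs h x)) (at x) =
    (\<lambda>w. (frechet_derivative (iter_dderiv vs f) (at x) w, frechet_derivative (iter_dderiv vs g) (at x) w,
          frechet_derivative (iter_dderiv vs h) (at x) w))" for x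
    using assms by (intro frechet_derivative_at[symmetric] has_derivative_Pair
        frechet_derivative_works[THEN iffD1])
  then show ?case
    using Cons by simp
qed simp

lemma scaling_limit_triple_uniform_limit:
  assumes "bounded U" and "(fs, f) \<in> scaling_limit" "(gs, g) \<in> scaling_limit" "(hs, h) \<in> scaling_limit"
  shows "uniform_limit U (\<lambda>n. iter_dderiv vs (\<lambda>x. (fs n x, gs n x, hs n x)))
           (iter_dderiv vs (\<lambda>x. (f x, g x, h x))) sequentially"
proof -
  note lim = scaling_limit_uniform_limit[OF assms(1) scaling_limit_iter_dderiv, THEN conjunct1]
  note diff = scaling_limit_differentiable[OF assms(2)] scaling_limit_differentiable[OF assms(3)]
    scaling_limit_differentiable[OF assms(4)]
  show ?thesis
    unfolding iter_dderiv_triple[OF diff(1,3,5)] iter_dderiv_triple[OF diff(2,4,6)]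
    by (intro uniform_limit_Pair lim assms(2-4))
qed

definition quad_z :: "real \<Rightarrow> real \<Rightarrow> real \<Rightarrow> real \<times> real \<times> real \<Rightarrow> real" where
  "quad_z \<delta> \<beta> \<sigma> X = snd (snd X) + \<delta> - 2 * pi\<^sup>2 * (fst X)\<^sup>2 - 2 * pi * \<sigma> * \<beta> * fst (snd X)"

text \<open>The components of \<open>f*\<close> in the scaled chart (see \<open>fstar_eq\<close>); \<open>(n\<^sup>2 + \<delta>) / n\<^sup>2\<close> is \<open>\<epsilon>\<^sub>n / n\<close>.\<close>
definition fstar_z :: "real \<Rightarrow> real \<Rightarrow> real \<Rightarrow> nat \<Rightarrow> real \<times> real \<times> real \<Rightarrow> real" where
  "fstar_z \<delta> \<beta> \<sigma> n X = snd (snd X) + \<delta>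
     - 2 * ((real n ^ 2 + \<delta>) / real n ^ 2) * (real n * sin (pi * fst X / real n)) ^ 2
     - \<sigma> * \<beta> * ((real n ^ 2 + \<delta>) / real n ^ 2) * (real n * sin (2 * pi * fst (snd X) / real n))"

definition fstar_y :: "real \<Rightarrow> real \<Rightarrow> real \<Rightarrow> real \<Rightarrow> nat \<Rightarrow> real \<times> real \<times> real \<Rightarrow> real" where
  "fstar_y \<nu> \<delta> \<beta> \<sigma> n X = fst (snd X) + \<nu> * (real n * sin (2 * pi * fstar_z \<delta> \<beta> \<sigma> n X / real n))"

definition fstar_x :: "(real \<Rightarrow> real) \<Rightarrow> real \<Rightarrow> real \<Rightarrow> real \<Rightarrow> real \<Rightarrow> nat
    \<Rightarrow> real \<times> real \<times> real \<Rightarrow> real" where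
  "fstar_x \<psi> \<mu> \<delta> \<beta> \<sigma> n X = fst X + \<mu> * (real n * sin (2 * pi * fst (snd X) / real n))
     + \<sigma> * (real n * \<psi> (fstar_z \<delta> \<beta> \<sigma> n X / real n))"

lemma quad_map_eq:
  "quad_map \<mu> \<nu> \<delta> \<beta> \<sigma> = (\<lambda>X. (fst X + 2 * pi * \<mu> * fst (snd X),
     fst (snd X) + 2 * pi * \<nu> * quad_z \<delta> \<beta> \<sigma> X, quad_z \<delta> \<beta> \<sigma> X))"
  by (auto simp: fun_eq_iff quad_map_def quad_z_def Let_def)

text \<open>\<open>\<rho>\<close> is the direction of the jump of the accelerator mode.\<close>
lemma lift_f_chart:
  fixes \<psi> :: "real \<Rightarrow> real" and \<delta> \<beta> :: real
  assumes \<psi>: "\<And>s. \<psi> (real n + s) = real n + \<psi> s" "\<And>t. \<psi> (- t) = - \<psi> t"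
    and n: "n \<noteq> 0" and \<rho>: "\<rho> \<in> {1, -1}"
    and x: "cos (2 * pi * x) = \<rho> * (1 - 2 * (sin (pi * \<xi> / real n))\<^sup>2)"
    and y: "sin (2 * pi * y) = \<rho> * \<sigma> * sin (2 * pi * \<eta> / real n)"
    and z: "z = \<rho> * (\<zeta> / real n)"
  defines "Z \<equiv> fstar_z \<delta> \<beta> \<sigma> n (\<xi>, \<eta>, \<zeta>)"
  shows "lift_f \<psi> (real n + \<delta> / real n) \<mu> \<nu> (\<beta> / real n) (x, y, z) =
    (x + \<mu> * sin (2 * pi * y) + \<rho> * (real n + \<psi> (Z / real n)),
     y + \<nu> * (\<rho> * sin (2 * pi * Z / real n)),
     \<rho> * (real n + Z / real n))"
proof -
  have z': "z + (real n + \<delta> / real n) * (cos (2 * pi * x) - \<beta> / real n * sin (2 * pi * y))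
              = \<rho> * (real n + Z / real n)"
    using n unfolding x y z Z_def fstar_z_def by (simp add: field_simps power2_eq_square)
  have "2 * pi * (real n + Z / real n) = 2 * pi * Z / real n + 2 * real n * pi"
    by (simp add: algebra_simps)
  then have "sin (2 * pi * (real n + Z / real n)) = sin (2 * pi * Z / real n)"
    by (simp add: sin_add)
  moreover have "sin (2 * pi * (\<rho> * w)) = \<rho> * sin (2 * pi * w)" for w
    using \<rho> by auto
  ultimately have "sin (2 * pi * (\<rho> * (real n + Z / real n))) = \<rho> * sin (2 * pi * Z / real n)"
    by simp
  moreover have "\<psi> (\<rho> * w) = \<rho> * \<psi> w" for w
    using \<rho> \<psi>(2) by auto
  then have "\<psi> (\<rho> * (real n + Z / real n)) = \<rho> * (real n + \<psi> (Z / real n))"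
    by (simp add: \<psi>(1))
  ultimately show ?thesis
    unfolding lift_f_def Let_def prod.case z' by simp
qed

lemma cos_2pi_half_add: "cos (2 * pi * (1/2 + u)) = - cos (2 * pi * u)"
  and sin_2pi_half_add: "sin (2 * pi * (1/2 + u)) = - sin (2 * pi * u)"
  and cos_2pi_half_diff: "cos (2 * pi * (1/2 - u)) = - cos (2 * pi * u)"
  and sin_2pi_half_diff: "sin (2 * pi * (1/2 - u)) = sin (2 * pi * u)"
  by (simp_all add: distrib_left right_diff_distrib cos_add sin_add cos_diff sin_diff)

lemma cos_2pi_double_sin: "cos (2 * pi * u) = 1 - 2 * (sin (pi * u))\<^sup>2"
  using cos_double_sin[of "pi * u"] by (simp add: mult.assoc)

lemma chart_trig:
  assumes "from_scaled (real n) p (\<xi>, \<eta>, \<zeta>) = (x, y, z)"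
  shows "cos (2 * pi * x) = jump_sgn p * (1 - 2 * (sin (pi * \<xi> / real n))\<^sup>2)"
    and "sin (2 * pi * y) = jump_sgn p * sigma_pt p * sin (2 * pi * \<eta> / real n)"
    and "z = jump_sgn p * (\<zeta> / real n)"
proof -
  have cos_\<xi>: "cos (2 * pi * (\<xi> / real n)) = 1 - 2 * (sin (pi * \<xi> / real n))\<^sup>2"
    using cos_2pi_double_sin[of "\<xi> / real n"] by simp
  have "cos (2 * pi * x) = jump_sgn p * (1 - 2 * (sin (pi * \<xi> / real n))\<^sup>2) \<and>
        sin (2 * pi * y) = jump_sgn p * sigma_pt p * sin (2 * pi * \<eta> / real n) \<and>
        z = jump_sgn p * (\<zeta> / real n)"
  proof (cases p)
    case Pplus
    with assms show ?thesis
      using cos_\<xi> by (auto simp: from_scaled_def)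
  next
    case Pminus
    with assms show ?thesis
      using cos_\<xi> cos_2pi_half_diff[of "\<xi> / real n"] by (auto simp: from_scaled_def)
  next
    case Qplus
    with assms show ?thesis
      using cos_\<xi> sin_2pi_half_add[of "\<eta> / real n"] by (auto simp: from_scaled_def)
  next
    case Qminus
    with assms show ?thesis
      using cos_\<xi> cos_2pi_half_add[of "\<xi> / real n"] sin_2pi_half_diff[of "\<eta> / real n"]
      by (auto simp: from_scaled_def)
  qed
  then show "cos (2 * pi * x) = jump_sgn p * (1 - 2 * (sin (pi * \<xi> / real n))\<^sup>2)"
    and "sin (2 * pi * y) = jump_sgn p * sigma_pt p * sin (2 * pi * \<eta> / real n)"
    and "z = jump_sgn p * (\<zeta> / real n)"
    by auto
qed

lemma fstar_eq:
  fixes \<psi> :: "real \<Rightarrow> real"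
  assumes \<psi>: "\<And>s. \<psi> (real n + s) = real n + \<psi> s" "\<And>t. \<psi> (- t) = - \<psi> t" and n: "n \<noteq> 0"
  shows "fstar \<psi> \<mu> \<nu> \<delta> \<beta> p n X = (fstar_x \<psi> \<mu> \<delta> \<beta> (sigma_pt p) n X,
           fstar_y \<nu> \<delta> \<beta> (sigma_pt p) n X, fstar_z \<delta> \<beta> (sigma_pt p) n X)"
proof -
  obtain \<xi> \<eta> \<zeta> where X: "X = (\<xi>, \<eta>, \<zeta>)"
    by (cases X)
  obtain x y z where xyz: "from_scaled (real n) p (\<xi>, \<eta>, \<zeta>) = (x, y, z)"
    by (cases "from_scaled (real n) p (\<xi>, \<eta>, \<zeta>)")
  have "jump_sgn p \<in> {1, -1}"
    by (cases p) auto
  note lift = lift_f_chart[where \<psi> = \<psi> and n = n and \<rho> = "jump_sgn p" and \<sigma> = "sigma_pt p"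
      and \<delta> = \<delta> and \<beta> = \<beta> and \<mu> = \<mu> and \<nu> = \<nu>, OF \<psi> n this chart_trig[OF xyz]]
  show ?thesis
    unfolding X fstar_def Let_def xyz lift chart_trig(2)[OF xyz] using xyz n
    by (cases p) (auto simp: from_scaled_def to_scaled_def fstar_x_def fstar_y_def field_simps)
qed

lemma degree_one_shift:
  assumes "\<And>z. \<psi> (z + 1) = \<psi> z + 1"
  shows "\<psi> (real n + s) = real n + \<psi> s"
proof (induction n)
  case (Suc n)
  have "\<psi> (real (Suc n) + s) = \<psi> ((real n + s) + 1)"
    by (simp add: algebra_simps)
  with Suc assms show ?case
    by simp
qed simp

lemma scaling_limit_fstar_z: "(fstar_z \<delta> \<beta> \<sigma>, quad_z \<delta> \<beta> \<sigma>) \<in> scaling_limit"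
proof -
  have "(\<lambda>n. (real n ^ 2 + \<delta>) / real n ^ 2) \<longlonglongrightarrow> 1"
  proof (rule Lim_transform_eventually)
    show "(\<lambda>n. 1 + \<delta> * (1 / real n) ^ 2) \<longlonglongrightarrow> 1"
      using tendsto_add[OF tendsto_const tendsto_mult[OF tendsto_const tendsto_power[OF lim_const_over_n]],
          of 1 \<delta> 1 2] by simp
    show "\<forall>\<^sub>F n in sequentially. 1 + \<delta> * (1 / real n) ^ 2 = (real n ^ 2 + \<delta>) / real n ^ 2"
      using eventually_gt_at_top[of 0] by eventually_elim (simp add: field_simps)
  qed
  then have "(\<lambda>n X. snd (snd X) + \<delta> - 2 * ((real n ^ 2 + \<delta>) / real n ^ 2) *
                 ((real n * sin (pi * fst X / real n)) * (real n * sin (pi * fst X / real n)))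
               - \<sigma> * \<beta> * ((real n ^ 2 + \<delta>) / real n ^ 2) * (real n * sin (2 * pi * fst (snd X) / real n)),
              \<lambda>X. snd (snd X) + \<delta> - 2 * 1 * ((pi * fst X) * (pi * fst X))
               - \<sigma> * \<beta> * 1 * (2 * pi * fst (snd X))) \<in> scaling_limit"
    by (intro scaling_limit_diff scaling_limit.add scaling_limit.mult scaling_limit.const
        scaling_limit_constant scaling_limit_blowup_sin scaling_limit_coordinates)
  then show ?thesis
  proof (rule scaling_limit_cong)
    show "(\<lambda>n X. snd (snd X) + \<delta> - 2 * ((real n ^ 2 + \<delta>) / real n ^ 2) *
                 ((real n * sin (pi * fst X / real n)) * (real n * sin (pi * fst X / real n)))
               - \<sigma> * \<beta> * ((real n ^ 2 + \<delta>) / real n ^ 2) * (real n * sin (2 * pi * fst (snd X) / real n)))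
          = fstar_z \<delta> \<beta> \<sigma>"
      by (simp add: fun_eq_iff fstar_z_def power2_eq_square)
  qed (simp add: fun_eq_iff quad_z_def power2_eq_square algebra_simps)
qed

lemma scaling_limit_fstar_y:
  "(fstar_y \<nu> \<delta> \<beta> \<sigma>, \<lambda>X. fst (snd X) + 2 * pi * \<nu> * quad_z \<delta> \<beta> \<sigma> X) \<in> scaling_limit"
proof -
  have "(\<lambda>n X. fst (snd X) + \<nu> * (real n * sin (2 * pi * fstar_z \<delta> \<beta> \<sigma> n X / real n)),
         \<lambda>X. fst (snd X) + \<nu> * (2 * pi * quad_z \<delta> \<beta> \<sigma> X)) \<in> scaling_limit"
    by (intro scaling_limit.add scaling_limit.mult scaling_limit_constant scaling_limit_blowup_sin
        scaling_limit_coordinates scaling_limit_fstar_z)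
  then show ?thesis
    by (rule scaling_limit_cong) (auto simp: fun_eq_iff fstar_y_def)
qed

lemma scaling_limit_fstar_x:
  assumes "real_analytic \<psi>" and "\<psi> 0 = 0" and "(\<psi> has_real_derivative 0) (at 0)"
  shows "(fstar_x \<psi> \<mu> \<delta> \<beta> \<sigma>, \<lambda>X. fst X + 2 * pi * \<mu> * fst (snd X)) \<in> scaling_limit"
proof -
  have "(\<lambda>n X. real n * (deriv ^^ 0) \<psi> (fstar_z \<delta> \<beta> \<sigma> n X / real n),
         \<lambda>X. (deriv ^^ Suc 0) \<psi> 0 * quad_z \<delta> \<beta> \<sigma> X) \<in> scaling_limit"
    using assms(2) by (intro scaling_limit.blowup real_analytic_deriv_tower assms(1)
        scaling_limit_fstar_z) simp
  then have "(\<lambda>n X. real n * \<psi> (fstar_z \<delta> \<beta> \<sigma> n X / real n), \<lambda>X. 0) \<in> scaling_limit"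
    using DERIV_imp_deriv[OF assms(3)] by simp
  then have "(\<lambda>n X. fst X + \<mu> * (real n * sin (2 * pi * fst (snd X) / real n))
                 + \<sigma> * (real n * \<psi> (fstar_z \<delta> \<beta> \<sigma> n X / real n)),
              \<lambda>X. fst X + \<mu> * (2 * pi * fst (snd X)) + \<sigma> * 0) \<in> scaling_limit"
    by (intro scaling_limit.add scaling_limit.mult scaling_limit_constant scaling_limit_blowup_sin
        scaling_limit_coordinates)
  then show ?thesis
    by (rule scaling_limit_cong) (auto simp: fun_eq_iff fstar_x_def)
qed

lemma fstar_uniform_limit:
  fixes \<psi> :: "real \<Rightarrow> real"
  assumes "real_analytic \<psi>" and "\<And>z. \<psi> (z + 1) = \<psi> z + 1" and "\<And>z. \<psi> (- z) = - \<psi> z"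
    and "\<psi> 0 = 0" and "(\<psi> has_real_derivative 0) (at 0)" and "bounded U"
  shows "uniform_limit U (\<lambda>n. iter_dderiv vs (fstar \<psi> \<mu> \<nu> \<delta> \<beta> p n))
           (iter_dderiv vs (quad_map \<mu> \<nu> \<delta> \<beta> (sigma_pt p))) sequentially"
proof -
  let ?\<sigma> = "sigma_pt p"
  have eq: "\<forall>\<^sub>F n in sequentially. fstar \<psi> \<mu> \<nu> \<delta> \<beta> p n =
          (\<lambda>X. (fstar_x \<psi> \<mu> \<delta> \<beta> ?\<sigma> n X, fstar_y \<nu> \<delta> \<beta> ?\<sigma> n X, fstar_z \<delta> \<beta> ?\<sigma> n X))"
    using eventually_gt_at_top[of 0]
    by eventually_elim (auto intro: fstar_eq degree_one_shift assms(2,3))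
  have lim: "uniform_limit U
      (\<lambda>n. iter_dderiv vs (\<lambda>X. (fstar_x \<psi> \<mu> \<delta> \<beta> ?\<sigma> n X, fstar_y \<nu> \<delta> \<beta> ?\<sigma> n X, fstar_z \<delta> \<beta> ?\<sigma> n X)))
      (iter_dderiv vs (quad_map \<mu> \<nu> \<delta> \<beta> ?\<sigma>)) sequentially"
    unfolding quad_map_eq
    by (intro scaling_limit_triple_uniform_limit assms(6) scaling_limit_fstar_x assms(1,4,5)
        scaling_limit_fstar_y scaling_limit_fstar_z)
  show ?thesis
    by (rule uniform_limit_cong[THEN iffD1, OF _ _ lim]) (use eq in \<open>auto elim: eventually_mono\<close>)
qed

definition scale3 :: "real \<Rightarrow> real \<Rightarrow> real \<Rightarrow> real \<times> real \<times> real \<Rightarrow> real \<times> real \<times> real" where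
  "scale3 a b c = (\<lambda>(u, v, w). (a * u, b * v, c * w))"

lemma linear_scale3: "linear (scale3 a b c)"
  by (rule linearI) (auto simp: scale3_def algebra_simps)

lemma bij_scale3:
  assumes "a \<noteq> 0" "b \<noteq> 0" "c \<noteq> 0"
  shows "bij (scale3 a b c)"
proof (rule o_bij[of "scale3 (1 / a) (1 / b) (1 / c)"])
  show "scale3 (1 / a) (1 / b) (1 / c) \<circ> scale3 a b c = id"
    and "scale3 a b c \<circ> scale3 (1 / a) (1 / b) (1 / c) = id"
    using assms by (auto simp: scale3_def fun_eq_iff)
qed

text \<open>The three scalings are forced by matching the coefficients of \<open>quad_map\<close> with those of
  \<open>michelson\<close>; the two hypotheses on \<open>\<phi>\<close> and \<open>K\<close> make the remaining coefficients agree.\<close>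
lemma quad_map_conj_michelson:
  fixes \<mu> \<nu> \<delta> \<beta> \<sigma> \<phi> K :: real
  assumes \<phi>: "\<phi>\<^sup>2 = 2 * pi\<^sup>2 * \<mu>\<^sup>2 * \<delta> * K\<^sup>2" "\<phi>\<^sup>2 * K = 4 * pi\<^sup>2 * \<nu>"
    and nz: "\<mu> \<noteq> 0" "\<delta> \<noteq> 0" "K \<noteq> 0"
  defines "T \<equiv> scale3 (\<phi> / (\<mu> * \<delta> * K)) (2 * pi / (\<delta> * K)) (\<phi> / \<delta>)"
  shows "T (quad_map \<mu> \<nu> \<delta> \<beta> \<sigma> X) = michelson \<phi> (\<sigma> * (\<beta> * K)) (T X)"
proof -
  obtain \<xi> \<eta> \<zeta> where X: "X = (\<xi>, \<eta>, \<zeta>)"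
    by (cases X)
  define A B C where "A = \<phi> / (\<mu> * \<delta> * K)" and "B = 2 * pi / (\<delta> * K)" and "C = \<phi> / \<delta>"
  define \<zeta>' where "\<zeta>' = \<zeta> + \<delta> - 2 * pi\<^sup>2 * \<xi>\<^sup>2 - 2 * pi * \<sigma> * \<beta> * \<eta>"
  have A2: "\<phi> * A\<^sup>2 = 2 * pi\<^sup>2 * C"
    using nz unfolding A_def C_def by (simp add: power2_eq_square field_simps \<phi>(1)[unfolded power2_eq_square])
  have "C * \<zeta> + \<phi> * (1 - (A * \<xi>)\<^sup>2 - \<sigma> * (\<beta> * K) * (B * \<eta>)) =
          C * \<zeta> + \<phi> - (\<phi> * A\<^sup>2) * \<xi>\<^sup>2 - \<sigma> * \<beta> * (\<phi> * K * B) * \<eta>"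
    by (simp add: algebra_simps power2_eq_square)
  also have "\<dots> = C * \<zeta>'"
    using nz unfolding A2 B_def C_def \<zeta>'_def by (simp add: field_simps)
  finally have w: "C * \<zeta> + \<phi> * (1 - (A * \<xi>)\<^sup>2 - \<sigma> * (\<beta> * K) * (B * \<eta>)) = C * \<zeta>'" .
  have v: "2 * pi * \<nu> * B = \<phi> * C"
    using nz \<phi>(2) unfolding B_def C_def by (simp add: field_simps power2_eq_square)
  have u: "2 * pi * \<mu> * A = \<phi> * B"
    using nz unfolding A_def B_def by (simp add: field_simps)
  have "quad_map \<mu> \<nu> \<delta> \<beta> \<sigma> X = (\<xi> + 2 * pi * \<mu> * \<eta>, \<eta> + 2 * pi * \<nu> * \<zeta>', \<zeta>')"
    unfolding X quad_map_def \<zeta>'_def by (simp add: Let_def)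
  moreover have "michelson \<phi> (\<sigma> * (\<beta> * K)) (T X) = (A * \<xi> + \<phi> * (B * \<eta>), B * \<eta> + \<phi> * (C * \<zeta>'), C * \<zeta>')"
    unfolding T_def A_def[symmetric] B_def[symmetric] C_def[symmetric] X michelson_def scale3_def
    by (simp add: Let_def w)
  ultimately show ?thesis
    unfolding T_def A_def[symmetric] B_def[symmetric] C_def[symmetric]
    using u v by (simp add: scale3_def algebra_simps)
qed

lemma michelson_parameters:
  fixes \<mu> \<nu> \<delta> :: real
  assumes pos: "\<mu> > 0" "\<nu> > 0" "\<delta> > 0"
  defines "\<phi> \<equiv> pi * (32 * \<mu>\<^sup>2 * \<nu>\<^sup>2 * \<delta>) powr (1/6)" and "K \<equiv> (2 * \<nu> / (\<delta> * \<mu>\<^sup>2)) powr (1/3)"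
  shows "\<phi> > 0" and "K > 0" and "\<phi>\<^sup>2 = 2 * pi\<^sup>2 * \<mu>\<^sup>2 * \<delta> * K\<^sup>2" and "\<phi>\<^sup>2 * K = 4 * pi\<^sup>2 * \<nu>"
proof -
  have \<phi>6: "\<phi> ^ 6 = pi ^ 6 * (32 * \<mu>\<^sup>2 * \<nu>\<^sup>2 * \<delta>)"
    using pos unfolding \<phi>_def by (simp add: power_mult_distrib powr_power)
  have K3: "K ^ 3 = 2 * \<nu> / (\<delta> * \<mu>\<^sup>2)"
    using pos unfolding K_def by (simp add: powr_power)
  show "\<phi> > 0" "K > 0"
    using pos unfolding \<phi>_def K_def by simp_all
  show \<phi>2: "\<phi>\<^sup>2 = 2 * pi\<^sup>2 * \<mu>\<^sup>2 * \<delta> * K\<^sup>2"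
  proof (rule power_eq_imp_eq_base[of _ 3])
    have "(\<phi>\<^sup>2) ^ 3 = \<phi> ^ 6"
      by (simp flip: power_mult)
    also have "\<dots> = 8 * pi ^ 6 * \<mu> ^ 6 * \<delta> ^ 3 * (K ^ 3)\<^sup>2"
      using pos unfolding \<phi>6 K3 by (simp add: field_simps power2_eq_square eval_nat_numeral)
    also have "\<dots> = (2 * pi\<^sup>2 * \<mu>\<^sup>2 * \<delta> * K\<^sup>2) ^ 3"
      by (simp add: power_mult_distrib flip: power_mult)
    finally show "(\<phi>\<^sup>2) ^ 3 = (2 * pi\<^sup>2 * \<mu>\<^sup>2 * \<delta> * K\<^sup>2) ^ 3" .
  qed (use pos \<open>K > 0\<close> in auto)
  have "\<phi>\<^sup>2 * K = 2 * pi\<^sup>2 * \<mu>\<^sup>2 * \<delta> * K ^ 3"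
    unfolding \<phi>2 by (simp add: eval_nat_numeral)
  also have "\<dots> = 4 * pi\<^sup>2 * \<nu>"
    using pos unfolding K3 by (simp add: field_simps)
  finally show "\<phi>\<^sup>2 * K = 4 * pi\<^sup>2 * \<nu>" .
qed

lemma quad_map_linearly_conjugate_michelson:
  fixes \<mu> \<nu> \<delta> \<beta> \<sigma> :: real
  assumes "\<mu> > 0" "\<nu> > 0" "\<delta> > 0"
  shows "\<exists>T. linear T \<and> bij T \<and>
           (\<forall>X. T (quad_map \<mu> \<nu> \<delta> \<beta> \<sigma> X) =
                michelson (pi * (32 * \<mu>\<^sup>2 * \<nu>\<^sup>2 * \<delta>) powr (1/6))
                          (\<sigma> * (\<beta> * (2 * \<nu> / (\<delta> * \<mu>\<^sup>2)) powr (1/3))) (T X))"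
proof -
  define \<phi> where "\<phi> = pi * (32 * \<mu>\<^sup>2 * \<nu>\<^sup>2 * \<delta>) powr (1/6)"
  define K where "K = (2 * \<nu> / (\<delta> * \<mu>\<^sup>2)) powr (1/3)"
  note param = michelson_parameters[OF assms, folded \<phi>_def K_def]
  define T where "T = scale3 (\<phi> / (\<mu> * \<delta> * K)) (2 * pi / (\<delta> * K)) (\<phi> / \<delta>)"
  have "linear T" "bij T"
    using assms param unfolding T_def by (simp_all add: linear_scale3 bij_scale3)
  moreover have "T (quad_map \<mu> \<nu> \<delta> \<beta> \<sigma> X) = michelson \<phi> (\<sigma> * (\<beta> * K)) (T X)" for X
    using assms param unfolding T_def by (intro quad_map_conj_michelson) auto
  ultimately show ?thesis
    unfolding \<phi>_def K_def by blast
qed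

theorem corollary1:
  fixes \<psi> :: "real \<Rightarrow> real" and \<mu> \<nu> \<delta> \<beta> :: real
  assumes analytic: "real_analytic \<psi>"
    and degree_one: "\<And>z. \<psi> (z + 1) = \<psi> z + 1"
    and odd: "\<And>z. \<psi> (- z) - (- z) = - (\<psi> z - z)"
    and psi0: "\<psi> 0 = 0"
    and dpsi0: "(\<psi> has_real_derivative 0) (at 0)"
    and pos: "\<mu> > 0" "\<nu> > 0" "\<delta> > 0"
  shows "\<exists>r>0. \<forall>p::accpt.
           (\<forall>vs. uniform_limit (ball 0 r)
                    (\<lambda>n. iter_dderiv vs (fstar \<psi> \<mu> \<nu> \<delta> \<beta> p n))
                    (iter_dderiv vs (quad_map \<mu> \<nu> \<delta> \<beta> (sigma_pt p))) sequentially)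
         \<and> (\<exists>T. linear T \<and> bij T \<and>
              (\<forall>X. T (quad_map \<mu> \<nu> \<delta> \<beta> (sigma_pt p) X) =
                   michelson (pi * (32 * \<mu>\<^sup>2 * \<nu>\<^sup>2 * \<delta>) powr (1/6))
                             (sigma_pt p * (\<beta> * (2 * \<nu> / (\<delta> * \<mu>\<^sup>2)) powr (1/3))) (T X)))"
proof (intro exI[of _ 1] conjI allI zero_less_one)
  have "\<psi> (- z) = - \<psi> z" for z
    using odd[of z] by simp
  then show "uniform_limit (ball 0 1) (\<lambda>n. iter_dderiv vs (fstar \<psi> \<mu> \<nu> \<delta> \<beta> p n))
               (iter_dderiv vs (quad_map \<mu> \<nu> \<delta> \<beta> (sigma_pt p))) sequentially" for p vs
    by (intro fstar_uniform_limit analytic degree_one psi0 dpsi0 bounded_ball)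
  show "\<exists>T. linear T \<and> bij T \<and> (\<forall>X. T (quad_map \<mu> \<nu> \<delta> \<beta> (sigma_pt p) X) =
          michelson (pi * (32 * \<mu>\<^sup>2 * \<nu>\<^sup>2 * \<delta>) powr (1/6))
                    (sigma_pt p * (\<beta> * (2 * \<nu> / (\<delta> * \<mu>\<^sup>2)) powr (1/3))) (T X))" for p
    by (rule quad_map_linearly_conjugate_michelson[OF pos])
qed

end
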